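(* Let $W$ be a recurrent infinite word and let $S$ be a graph with words satisfying properties (1)–(6) of a Rauzy scheme for $W$. Then for every factor $u$ of $W$ there is an admissible path $s$ in $S$ such that $u\sqsubseteq F(s)$.
   Context: An infinite word $W$ is recurrent if every factor of $W$ occurs in $W$ infinitely many times. For finite words, $u\sqsubseteq w$ means $u$ is a factor of $w$, and $u\sqsubseteq_k w$ means $u$ occurs in $w$ at least $k$ times. A graph with words is a strongly connected finite directed graph (multiple edges and loops allowed) in which every edge $e$ carries two finite words, a front word $F(e)$ and a back word $B(e)$, and every vertex either has in-degree $1$ and out-degree $>1$ (distributing vertex) or in-degree $>1$ and out-degree $1$ (collecting vertex). A path is a finite nonempty sequence of edges $v_1\dots v_n$ with each $v_{i+1}$ starting where $v_i$ ends; its edge record is the word $v_1\dots v_n$ over the alphabet of edges, and subpaths, prefixes, suffixes and $s_1\sqsubseteq_k s_2$ for paths are defined via edge records. A path is symmetric if its first edge starts at a collecting vertex and its last edge ends at a distributing vertex. For $s=v_1\dots v_n$, $F(s)$ is the concatenation, in order, of the front words of $v_1$ and of all $v_i$ ($i\ge2$) starting at a distributing vertex; $B(s)$ is the concatenation, in order, of the back words of all $v_i$ ($i\le n-1$) ending at a collecting vertex and of $v_n$. The properties of a Rauzy scheme for $W$ are: (1) the graph has more than one edge; (2) front words of edges leaving a common distributing vertex have pairwise distinct first letters, and back words of edges entering a common collecting vertex have pairwise distinct last letters; (3) $F(s)=B(s)$ for every symmetric path $s$; (4) for symmetric paths $s_1,s_2$ and $k\ge1$, $F(s_1)\sqsubseteq_k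 F(s_2)$ implies $s_1\sqsubseteq_k s_2$; (5) all words on edges are factors of $W$; (6) every factor of $W$ is a factor of $F(s)$ for some symmetric path $s$; (7) for every edge $e$ there is a factor $u_e$ of $W$ such that every symmetric path $s$ with $u_e\sqsubseteq F(s)$ passes through $e$. A graph with words satisfying all of (1)–(7) is a Rauzy scheme for $W$. A symmetric path $s$ is admissible if $F(s)\sqsubseteq W$. *)

theory Defs
  imports Main
begin

definition occurs_at_inf :: "'a list \<Rightarrow> (nat \<Rightarrow> 'a) \<Rightarrow> nat \<Rightarrow> bool" where
  "occurs_at_inf u W i \<longleftrightarrow> map W [i..<i + length u] = u"

definition factor_inf :: "'a list \<Rightarrow> (nat \<Rightarrow> 'a) \<Rightarrow> bool" where
  "factor_inf u W \<longleftrightarrow> (\<exists>i. occurs_at_inf u W i)"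

definition recurrent :: "(nat \<Rightarrow> 'a) \<Rightarrow> bool" where
  "recurrent W \<longleftrightarrow> (\<forall>u. factor_inf u W \<longrightarrow> infinite {i. occurs_at_inf u W i})"

definition factor :: "'a list \<Rightarrow> 'a list \<Rightarrow> bool" where
  "factor u w \<longleftrightarrow> (\<exists>p q. w = p @ u @ q)"

definition occ :: "'a list \<Rightarrow> 'a list \<Rightarrow> nat" where
  "occ u w = card {i. i + length u \<le> length w \<and> take (length u) (drop i w) = u}"

definition factor_k :: "'a list \<Rightarrow> nat \<Rightarrow> 'a list \<Rightarrow> bool" where
  "factor_k u k w \<longleftrightarrow> k \<le> occ u w"

text \<open>A graph is given by a set of edges E (of type 'e) together with source and
 target maps into the vertex type 'v; this allows multiple edges and loops. Fw / Bw give front / back words.\<close>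

definition vertices :: "'e set \<Rightarrow> ('e \<Rightarrow> 'v) \<Rightarrow> ('e \<Rightarrow> 'v) \<Rightarrow> 'v set" where
  "vertices E src tgt = src ` E \<union> tgt ` E"

definition indeg :: "'e set \<Rightarrow> ('e \<Rightarrow> 'v) \<Rightarrow> 'v \<Rightarrow> nat" where
  "indeg E tgt v = card {e \<in> E. tgt e = v}"

definition outdeg :: "'e set \<Rightarrow> ('e \<Rightarrow> 'v) \<Rightarrow> 'v \<Rightarrow> nat" where
  "outdeg E src v = card {e \<in> E. src e = v}"

definition distributing :: "'e set \<Rightarrow> ('e \<Rightarrow> 'v) \<Rightarrow> ('e \<Rightarrow> 'v) \<Rightarrow> 'v \<Rightarrow> bool" where
  "distributing E src tgt v \<longleftrightarrow> indeg E tgt v = 1 \<and> outdeg E src v > 1"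

definition collecting :: "'e set \<Rightarrow> ('e \<Rightarrow> 'v) \<Rightarrow> ('e \<Rightarrow> 'v) \<Rightarrow> 'v \<Rightarrow> bool" where
  "collecting E src tgt v \<longleftrightarrow> indeg E tgt v > 1 \<and> outdeg E src v = 1"

definition strongly_connected :: "'e set \<Rightarrow> ('e \<Rightarrow> 'v) \<Rightarrow> ('e \<Rightarrow> 'v) \<Rightarrow> bool" where
  "strongly_connected E src tgt \<longleftrightarrow>
     (\<forall>v \<in> vertices E src tgt. \<forall>w \<in> vertices E src tgt.
        (v, w) \<in> {(src e, tgt e) | e. e \<in> E}\<^sup>*)"

definition graph_with_words ::
  "'e set \<Rightarrow> ('e \<Rightarrow> 'v) \<Rightarrow> ('e \<Rightarrow> 'v) \<Rightarrow> ('e \<Rightarrow> 'a list) \<Rightarrow> ('e \<Rightarrow> 'a list) \<Rightarrow> bool" where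
  "graph_with_words E src tgt Fw Bw \<longleftrightarrow>
     finite E \<and> strongly_connected E src tgt \<and>
     (\<forall>v \<in> vertices E src tgt. distributing E src tgt v \<or> collecting E src tgt v)"

definition is_path :: "'e set \<Rightarrow> ('e \<Rightarrow> 'v) \<Rightarrow> ('e \<Rightarrow> 'v) \<Rightarrow> 'e list \<Rightarrow> bool" where
  "is_path E src tgt s \<longleftrightarrow> s \<noteq> [] \<and> set s \<subseteq> E \<and>
     (\<forall>i. Suc i < length s \<longrightarrow> src (s ! Suc i) = tgt (s ! i))"

definition symmetric_path :: "'e set \<Rightarrow> ('e \<Rightarrow> 'v) \<Rightarrow> ('e \<Rightarrow> 'v) \<Rightarrow> 'e list \<Rightarrow> bool" where
  "symmetric_path E src tgt s \<longleftrightarrow> is_path E src tgt s \<and>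
     collecting E src tgt (src (hd s)) \<and> distributing E src tgt (tgt (last s))"

definition front_word :: "'e set \<Rightarrow> ('e \<Rightarrow> 'v) \<Rightarrow> ('e \<Rightarrow> 'v) \<Rightarrow> ('e \<Rightarrow> 'a list) \<Rightarrow> 'e list \<Rightarrow> 'a list" where
  "front_word E src tgt Fw s =
     Fw (hd s) @ concat (map Fw (filter (\<lambda>e. distributing E src tgt (src e)) (tl s)))"

definition back_word :: "'e set \<Rightarrow> ('e \<Rightarrow> 'v) \<Rightarrow> ('e \<Rightarrow> 'v) \<Rightarrow> ('e \<Rightarrow> 'a list) \<Rightarrow> 'e list \<Rightarrow> 'a list" where
  "back_word E src tgt Bw s =
     concat (map Bw (filter (\<lambda>e. collecting E src tgt (tgt e)) (butlast s))) @ Bw (last s)"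

definition rauzy_props_1_6 ::
  "(nat \<Rightarrow> 'a) \<Rightarrow> 'e set \<Rightarrow> ('e \<Rightarrow> 'v) \<Rightarrow> ('e \<Rightarrow> 'v) \<Rightarrow> ('e \<Rightarrow> 'a list) \<Rightarrow> ('e \<Rightarrow> 'a list) \<Rightarrow> bool" where
  "rauzy_props_1_6 W E src tgt Fw Bw \<longleftrightarrow>
     \<comment> \<open>(1)\<close>
     card E > 1 \<and>
     \<comment> \<open>(2)\<close>
     (\<forall>e1 \<in> E. \<forall>e2 \<in> E. e1 \<noteq> e2 \<longrightarrow> src e1 = src e2 \<longrightarrow> distributing E src tgt (src e1) \<longrightarrow>
         Fw e1 \<noteq> [] \<and> Fw e2 \<noteq> [] \<and> hd (Fw e1) \<noteq> hd (Fw e2)) \<and>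
     (\<forall>e1 \<in> E. \<forall>e2 \<in> E. e1 \<noteq> e2 \<longrightarrow> tgt e1 = tgt e2 \<longrightarrow> collecting E src tgt (tgt e1) \<longrightarrow>
         Bw e1 \<noteq> [] \<and> Bw e2 \<noteq> [] \<and> last (Bw e1) \<noteq> last (Bw e2)) \<and>
     \<comment> \<open>(3)\<close>
     (\<forall>s. symmetric_path E src tgt s \<longrightarrow> front_word E src tgt Fw s = back_word E src tgt Bw s) \<and>
     \<comment> \<open>(4)\<close>
     (\<forall>s1 s2 k. symmetric_path E src tgt s1 \<longrightarrow> symmetric_path E src tgt s2 \<longrightarrow> k \<ge> 1 \<longrightarrow>
         factor_k (front_word E src tgt Fw s1) k (front_word E src tgt Fw s2) \<longrightarrow> factor_k s1 k s2) \<and>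
     \<comment> \<open>(5)\<close>
     (\<forall>e \<in> E. factor_inf (Fw e) W \<and> factor_inf (Bw e) W) \<and>
     \<comment> \<open>(6)\<close>
     (\<forall>u. factor_inf u W \<longrightarrow>
         (\<exists>s. symmetric_path E src tgt s \<and> factor u (front_word E src tgt Fw s)))"

definition admissible ::
  "(nat \<Rightarrow> 'a) \<Rightarrow> 'e set \<Rightarrow> ('e \<Rightarrow> 'v) \<Rightarrow> ('e \<Rightarrow> 'v) \<Rightarrow> ('e \<Rightarrow> 'a list) \<Rightarrow> 'e list \<Rightarrow> bool" where
  "admissible W E src tgt Fw s \<longleftrightarrow>
     symmetric_path E src tgt s \<and> factor_inf (front_word E src tgt Fw s) W"

end

theory Submission
  imports Defs "HOL-Library.Sublist"
begin

text \<open>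
  Let L bound the lengths of all front and back words on edges.
  By recurrence, the factor u of W has an occurrence at a position at least L,
  so a u b is a factor of W for some words a, b of length L.  By property (6),
  a u b is a factor of F(s) for a symmetric path s, i.e. F(s) = \<alpha> u \<beta>.
  We then shrink s while keeping u inside its front word:
  \<^item> if \<beta> is longer than L, cutting s just before its last edge that leaves a
    distributing vertex yields a shorter symmetric path whose front word lacks
    only the (short) final front word of that edge;
  \<^item> symmetrically, using F = B on symmetric paths (property (3)), cutting s
    just after its first edge entering a collecting vertex removes only a short
    back word at the left end.
  The result is a symmetric path s' with F(s') = \<alpha>' u \<beta>', where \<alpha>' is a
  suffix of a and \<beta>' a prefix of b.  Hence F(s') is a factor of a u b, so of
  W, i.e. s' is admissible.
\<close>

lemma path_prefix:
  assumes "is_path E src tgt (xs @ ys)" "xs \<noteq> []"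
  shows "is_path E src tgt xs"
  using assms unfolding is_path_def
  by (metis Suc_lessD le_add1 nth_append order_less_le_trans length_append set_append le_sup_iff)

lemma path_suffix:
  assumes "is_path E src tgt (xs @ ys)" "ys \<noteq> []"
  shows "is_path E src tgt ys"
proof -
  have "src (ys ! Suc i) = tgt (ys ! i)" if "Suc i < length ys" for i
  proof -
    have "Suc (length xs + i) < length (xs @ ys)" using that by simp
    hence "src ((xs @ ys) ! Suc (length xs + i)) = tgt ((xs @ ys) ! (length xs + i))"
      using assms(1) unfolding is_path_def by blast
    thus ?thesis by (metis add_Suc_right nth_append_length_plus)
  qed
  thus ?thesis using assms unfolding is_path_def by auto
qed

lemma path_junction:
  assumes "is_path E src tgt (xs @ ys)" "xs \<noteq> []" "ys \<noteq> []"
  shows "src (hd ys) = tgt (last xs)"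
proof -
  obtain n where n: "length xs = Suc n" using assms(2) by (cases xs) auto
  have "Suc n < length (xs @ ys)" using n assms(3) by simp
  hence "src ((xs @ ys) ! Suc n) = tgt ((xs @ ys) ! n)"
    using assms(1) unfolding is_path_def by blast
  moreover have "(xs @ ys) ! Suc n = hd ys" using n assms(3)
    by (metis hd_conv_nth nth_append_length_plus add_0_right)
  moreover have "(xs @ ys) ! n = last xs" using n assms(2)
    by (simp add: last_conv_nth nth_append)
  ultimately show ?thesis by simp
qed

lemma front_word_cut_last_edge:
  assumes sym: "symmetric_path E src tgt s"
    and ex: "\<exists>z\<in>set (tl s). distributing E src tgt (src z)"
  obtains p e where "symmetric_path E src tgt p" "e \<in> E" "length p < length s"
    "front_word E src tgt Fw s = front_word E src tgt Fw p @ Fw e"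
proof -
  obtain q e r where qer: "tl s = q @ e # r" and de: "distributing E src tgt (src e)"
    and nr: "\<forall>z\<in>set r. \<not> distributing E src tgt (src z)"
    using split_list_last_prop[OF ex] by blast
  have "s \<noteq> []" using sym unfolding symmetric_path_def is_path_def by blast
  define p where "p = hd s # q"
  have s_eq: "s = p @ e # r" using \<open>s \<noteq> []\<close> qer unfolding p_def by (cases s) auto
  have pth: "is_path E src tgt (p @ e # r)" using sym s_eq unfolding symmetric_path_def by simp
  have "is_path E src tgt p" using path_prefix[OF pth] p_def by simp
  moreover have "src e = tgt (last p)" using path_junction[of E src tgt p "e # r"] pth p_def by simp
  moreover have "hd p = hd s" "p \<noteq> []" unfolding p_def by simp_all
  ultimately have "symmetric_path E src tgt p"
    using sym de unfolding symmetric_path_def by simp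
  moreover have "e \<in> E" using pth unfolding is_path_def by auto
  moreover have "length p < length s" using s_eq by simp
  moreover have "filter (\<lambda>e. distributing E src tgt (src e)) r = []"
    using nr by (simp add: filter_empty_conv)
  hence "front_word E src tgt Fw (p @ e # r) = front_word E src tgt Fw p @ Fw e"
    unfolding front_word_def using de \<open>p \<noteq> []\<close> by simp
  ultimately show ?thesis using that unfolding s_eq by blast
qed

lemma front_word_first_edge:
  assumes "\<not> (\<exists>z\<in>set (tl s). distributing E src tgt (src z))"
  shows "front_word E src tgt Fw s = Fw (hd s)"
  using assms unfolding front_word_def by (simp add: filter_empty_conv)

lemma back_word_cut_first_edge:
  assumes sym: "symmetric_path E src tgt s"
    and ex: "\<exists>z\<in>set (butlast s). collecting E src tgt (tgt z)"
  obtains p e where "symmetric_path E src tgt p" "e \<in> E" "length p < length s"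
    "back_word E src tgt Bw s = Bw e @ back_word E src tgt Bw p"
proof -
  obtain q e r where qer: "butlast s = q @ e # r" and ce: "collecting E src tgt (tgt e)"
    and nq: "\<forall>z\<in>set q. \<not> collecting E src tgt (tgt z)"
    using split_list_first_prop[OF ex] by blast
  have "s \<noteq> []" using sym unfolding symmetric_path_def is_path_def by blast
  define p where "p = r @ [last s]"
  have s_eq: "s = (q @ [e]) @ p" using \<open>s \<noteq> []\<close> qer unfolding p_def
    by (metis append_butlast_last_id append.assoc append_Cons append_Nil)
  have pth: "is_path E src tgt ((q @ [e]) @ p)" using sym s_eq unfolding symmetric_path_def by simp
  have "is_path E src tgt p" using path_suffix[OF pth] p_def by simp
  moreover have "src (hd p) = tgt e" using path_junction[OF pth] p_def by simp
  moreover have "last p = last s" unfolding p_def by simp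
  ultimately have "symmetric_path E src tgt p"
    using sym ce unfolding symmetric_path_def by simp
  moreover have "e \<in> E" using pth unfolding is_path_def by auto
  moreover have "length p < length s" using s_eq by simp
  moreover have "filter (\<lambda>e. collecting E src tgt (tgt e)) q = []"
    using nq by (simp add: filter_empty_conv)
  hence "back_word E src tgt Bw s = Bw e @ back_word E src tgt Bw p"
    unfolding back_word_def using qer ce p_def by simp
  ultimately show ?thesis using that by blast
qed

lemma back_word_last_edge:
  assumes "\<not> (\<exists>z\<in>set (butlast s). collecting E src tgt (tgt z))"
  shows "back_word E src tgt Bw s = Bw (last s)"
  using assms unfolding back_word_def by (simp add: filter_empty_conv)

lemma shrink_right_context:
  assumes LF: "\<forall>e\<in>E. length (Fw e) \<le> L"
  shows "symmetric_path E src tgt s \<Longrightarrow> front_word E src tgt Fw s = w @ \<beta> \<Longrightarrow>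
    \<exists>s' \<beta>'. symmetric_path E src tgt s' \<and> front_word E src tgt Fw s' = w @ \<beta>'
       \<and> prefix \<beta>' \<beta> \<and> length \<beta>' \<le> L"
proof (induction "length s" arbitrary: s \<beta> rule: less_induct)
  case less
  show ?case
  proof (cases "length \<beta> \<le> L")
    case True
    thus ?thesis using less.prems by blast
  next
    case False
    have "\<exists>z\<in>set (tl s). distributing E src tgt (src z)"
    proof (rule ccontr)
      assume "\<not> ?thesis"
      hence "front_word E src tgt Fw s = Fw (hd s)" by (rule front_word_first_edge)
      moreover have "hd s \<in> E" using less.prems(1) unfolding symmetric_path_def is_path_def by auto
      moreover have "length \<beta> \<le> length (front_word E src tgt Fw s)" using less.prems(2) by simp
      ultimately show False using LF False by fastforce
    qed
    then obtain p e where p: "symmetric_path E src tgt p" "e \<in> E" "length p < length s"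
      and fw: "front_word E src tgt Fw s = front_word E src tgt Fw p @ Fw e"
      using front_word_cut_last_edge[OF less.prems(1)] by blast
    have "length (Fw e) \<le> length \<beta>" using LF p(2) False by fastforce
    moreover have "suffix (Fw e) (w @ \<beta>)" "suffix \<beta> (w @ \<beta>)"
      using fw less.prems(2) by (metis suffixI)+
    ultimately have "suffix (Fw e) \<beta>" by (rule suffix_length_suffix[rotated 2])
    then obtain t where t: "\<beta> = t @ Fw e" by (auto simp: suffix_def)
    hence "front_word E src tgt Fw p = w @ t" using fw less.prems(2) by simp
    then obtain s' \<beta>' where "symmetric_path E src tgt s'" "front_word E src tgt Fw s' = w @ \<beta>'"
      "prefix \<beta>' t" "length \<beta>' \<le> L"
      using less.hyps[OF p(3) p(1)] by blast
    thus ?thesis using t(1) by (meson prefix_append prefix_order.trans)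
  qed
qed

lemma shrink_left_context:
  assumes FB: "\<forall>s. symmetric_path E src tgt s \<longrightarrow>
      front_word E src tgt Fw s = back_word E src tgt Bw s"
    and LB: "\<forall>e\<in>E. length (Bw e) \<le> L"
  shows "symmetric_path E src tgt s \<Longrightarrow> front_word E src tgt Fw s = \<alpha> @ w \<Longrightarrow>
    \<exists>s' \<alpha>'. symmetric_path E src tgt s' \<and> front_word E src tgt Fw s' = \<alpha>' @ w
       \<and> suffix \<alpha>' \<alpha> \<and> length \<alpha>' \<le> L"
proof (induction "length s" arbitrary: s \<alpha> rule: less_induct)
  case less
  have bw: "back_word E src tgt Bw s = \<alpha> @ w" using FB less.prems by simp
  show ?case
  proof (cases "length \<alpha> \<le> L")
    case True
    thus ?thesis using less.prems by blast
  next
    case False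
    have "\<exists>z\<in>set (butlast s). collecting E src tgt (tgt z)"
    proof (rule ccontr)
      assume "\<not> ?thesis"
      hence "back_word E src tgt Bw s = Bw (last s)" by (rule back_word_last_edge)
      moreover have "last s \<in> E" using less.prems(1) unfolding symmetric_path_def is_path_def by auto
      moreover have "length \<alpha> \<le> length (back_word E src tgt Bw s)" using bw by simp
      ultimately show False using LB False by fastforce
    qed
    then obtain p e where p: "symmetric_path E src tgt p" "e \<in> E" "length p < length s"
      and "back_word E src tgt Bw s = Bw e @ back_word E src tgt Bw p"
      using back_word_cut_first_edge[OF less.prems(1)] by blast
    hence fw: "Bw e @ front_word E src tgt Fw p = \<alpha> @ w" using FB bw by simp
    have "length (Bw e) \<le> length \<alpha>" using LB p(2) False by fastforce
    moreover have "prefix (Bw e) (\<alpha> @ w)" "prefix \<alpha> (\<alpha> @ w)"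
      using fw by (metis prefixI)+
    ultimately have "prefix (Bw e) \<alpha>" by (rule prefix_length_prefix[rotated 2])
    then obtain t where t: "\<alpha> = Bw e @ t" by (auto simp: prefix_def)
    hence "front_word E src tgt Fw p = t @ w" using fw by simp
    then obtain s' \<alpha>' where "symmetric_path E src tgt s'" "front_word E src tgt Fw s' = \<alpha>' @ w"
      "suffix \<alpha>' t" "length \<alpha>' \<le> L"
      using less.hyps[OF p(3) p(1)] by blast
    thus ?thesis using t(1) by (meson suffix_appendI)
  qed
qed

lemma shrink_contexts:
  assumes FB: "\<forall>s. symmetric_path E src tgt s \<longrightarrow>
      front_word E src tgt Fw s = back_word E src tgt Bw s"
    and LF: "\<forall>e\<in>E. length (Fw e) \<le> L" and LB: "\<forall>e\<in>E. length (Bw e) \<le> L"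
    and "symmetric_path E src tgt s" "front_word E src tgt Fw s = \<alpha> @ u @ \<beta>"
  obtains s' \<alpha>' \<beta>' where "symmetric_path E src tgt s'"
    "front_word E src tgt Fw s' = \<alpha>' @ u @ \<beta>'"
    "suffix \<alpha>' \<alpha>" "prefix \<beta>' \<beta>" "length \<alpha>' \<le> L" "length \<beta>' \<le> L"
proof -
  have "front_word E src tgt Fw s = (\<alpha> @ u) @ \<beta>" using assms(5) by simp
  then obtain s1 \<beta>' where s1: "symmetric_path E src tgt s1"
    "front_word E src tgt Fw s1 = \<alpha> @ (u @ \<beta>')" "prefix \<beta>' \<beta>" "length \<beta>' \<le> L"
    using shrink_right_context[OF LF assms(4)] by (metis append.assoc)
  obtain s' \<alpha>' where "symmetric_path E src tgt s'" "front_word E src tgt Fw s' = \<alpha>' @ u @ \<beta>'"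
    "suffix \<alpha>' \<alpha>" "length \<alpha>' \<le> L"
    using shrink_left_context[OF FB LB s1(1,2)] by blast
  thus ?thesis using that s1(3,4) by blast
qed

lemma factor_inf_factor:
  assumes "factor_inf w W" "factor v w"
  shows "factor_inf v W"
proof -
  obtain i x y where "occurs_at_inf (x @ v @ y) W i"
    using assms unfolding factor_inf_def factor_def by blast
  hence "map W [i..<i + length (x @ v @ y)] = x @ v @ y" unfolding occurs_at_inf_def .
  hence "take (length v) (drop (length x) (map W [i..<i + length (x @ v @ y)])) = v" by simp
  hence "occurs_at_inf v W (i + length x)"
    unfolding occurs_at_inf_def by (simp add: drop_map take_map add.assoc)
  thus ?thesis unfolding factor_inf_def by blast
qed

text \<open>In a recurrent word every factor occurs arbitrarily far to the right,
  hence can be extended by L letters on both sides.\<close>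
lemma recurrent_factor_window:
  assumes "recurrent W" "factor_inf u W"
  obtains a b where "length a = L" "length b = L" "factor_inf (a @ u @ b) W"
proof -
  have "infinite {i. occurs_at_inf u W i}" using assms unfolding recurrent_def by blast
  then obtain p where pL: "p \<ge> L" and occ: "occurs_at_inf u W p"
    using finite_nat_set_iff_bounded_le[of "{i. occurs_at_inf u W i}"]
    by (metis mem_Collect_eq nat_le_linear)
  define a where "a = map W [p - L..<p]"
  define b where "b = map W [p + length u..<p + length u + L]"
  have "[p - L..<p + length u + L] =
      [p - L..<p] @ [p..<p + length u] @ [p + length u..<p + length u + L]"
    using pL by (metis add.assoc diff_le_self le_add1 upt_add_eq_append)
  hence "map W [p - L..<p + length u + L] = a @ u @ b"
    using occ unfolding a_def b_def occurs_at_inf_def by simp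
  moreover have "length a = L" "length b = L" unfolding a_def b_def using pL by auto
  moreover have "p - L + length (a @ u @ b) = p + length u + L"
    using calculation pL by simp
  ultimately have "occurs_at_inf (a @ u @ b) W (p - L)"
    unfolding occurs_at_inf_def by metis
  thus ?thesis using that \<open>length a = L\<close> \<open>length b = L\<close> unfolding factor_inf_def by blast
qed

theorem lemma3p4:
  fixes W :: "nat \<Rightarrow> 'a"
    and E :: "'e set" and src tgt :: "'e \<Rightarrow> 'v" and Fw Bw :: "'e \<Rightarrow> 'a list"
  assumes "recurrent W"
    and "graph_with_words E src tgt Fw Bw"
    and "rauzy_props_1_6 W E src tgt Fw Bw"
    and "factor_inf u W"
  shows "\<exists>s. admissible W E src tgt Fw s \<and> factor u (front_word E src tgt Fw s)"
proof -
  have "finite E" using assms(2) unfolding graph_with_words_def by blast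
  define L where "L = Max ({0} \<union> (\<lambda>e. length (Fw e)) ` E \<union> (\<lambda>e. length (Bw e)) ` E)"
  have LF: "\<forall>e\<in>E. length (Fw e) \<le> L" and LB: "\<forall>e\<in>E. length (Bw e) \<le> L"
    unfolding L_def using \<open>finite E\<close> by auto
  have FB: "\<forall>s. symmetric_path E src tgt s \<longrightarrow> front_word E src tgt Fw s = back_word E src tgt Bw s"
    and covers: "\<And>v. factor_inf v W \<Longrightarrow>
         \<exists>s. symmetric_path E src tgt s \<and> factor v (front_word E src tgt Fw s)"
    using assms(3) unfolding rauzy_props_1_6_def by blast+
  obtain a b where ab: "length a = L" "length b = L" "factor_inf (a @ u @ b) W"
    using recurrent_factor_window[OF assms(1,4)] by blast
  obtain s where s: "symmetric_path E src tgt s" "factor (a @ u @ b) (front_word E src tgt Fw s)"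
    using covers ab(3) by blast
  then obtain g d where "front_word E src tgt Fw s = (g @ a) @ u @ (b @ d)"
    unfolding factor_def by auto
  then obtain s' \<alpha>' \<beta>' where s': "symmetric_path E src tgt s'"
    "front_word E src tgt Fw s' = \<alpha>' @ u @ \<beta>'"
    and "suffix \<alpha>' (g @ a)" "prefix \<beta>' (b @ d)" "length \<alpha>' \<le> L" "length \<beta>' \<le> L"
    using shrink_contexts[OF FB LF LB s(1)] by blast
  moreover have "suffix a (g @ a)" "prefix b (b @ d)" by (auto intro: suffixI prefixI)
  ultimately have "suffix \<alpha>' a" "prefix \<beta>' b"
    using ab(1,2) suffix_length_suffix prefix_length_prefix by metis+
  hence "factor (front_word E src tgt Fw s') (a @ u @ b)"
    unfolding s'(2) factor_def suffix_def prefix_def by fastforce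
  hence "admissible W E src tgt Fw s'"
    using s'(1) ab(3) factor_inf_factor unfolding admissible_def by blast
  moreover have "factor u (front_word E src tgt Fw s')" unfolding factor_def s'(2) by blast
  ultimately show ?thesis by blast
qed

end
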